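(* There is an absolute constant $C>0$ and an algorithm with the following property. Let $S$ be a set of arms with reward distributions supported on $[0,1]$ and means $\theta_1\ge\dots\ge\theta_{|S|}$ (indexing unknown to the algorithm), where $|S|/10$ and $K/2$ are integers, $\frac{|S|}{3}\le K\le|S|-1$, and let $\gamma,\delta\in(0,1/2]$, $\phi\in(0,1]$. If $\theta_{K/2}-\theta_K\ge\phi$, then the algorithm makes at most $C\frac{|S|}{\phi^2}(\log\frac1\gamma+\log\frac1\delta)$ pulls and with probability at least $1-\delta$ outputs a set $T\subseteq S$ with $|T|=|S|/10$ such that at most $\gamma K$ arms of $T$ belong to $\{K+1,\dots,|S|\}$ (the bottom $|S|-K$ arms of $S$).
   Context: Stochastic bandit model: each pull yields an independent sample from the pulled arm's unknown distribution. *)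

theory Defs
  imports "HOL-Probability.Probability"
begin

text \<open>An algorithm, after seeing the history (list of (pulled arm, observed reward)),
either pulls an arm or stops and outputs a set of arms.\<close>

datatype action = Pull nat | Stop "nat set"

text \<open>Reward-table model of the stochastic bandit: X (i, j) is the reward of
the (j+1)-th pull of arm i. hist P X k is the history after k steps of the policy P
(if the policy has stopped, the history no longer changes); its length is the
number of pulls made.\<close>

fun hist :: "((nat \<times> real) list \<Rightarrow> action) \<Rightarrow> (nat \<times> nat \<Rightarrow> real) \<Rightarrow> nat \<Rightarrow> (nat \<times> real) list" where
  "hist P X 0 = []"
| "hist P X (Suc k) =
     (let h = hist P X k in
      case P h of
        Pull i \<Rightarrow> h @ [(i, X (i, length (filter (\<lambda>p. fst p = i) h)))]
      | Stop T \<Rightarrow> h)"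

definition stopped :: "((nat \<times> real) list \<Rightarrow> action) \<Rightarrow> (nat \<times> nat \<Rightarrow> real) \<Rightarrow> nat \<Rightarrow> bool" where
  "stopped P X k \<longleftrightarrow> (\<exists>T. P (hist P X k) = Stop T)"

definition alg_output :: "((nat \<times> real) list \<Rightarrow> action) \<Rightarrow> (nat \<times> nat \<Rightarrow> real) \<Rightarrow> nat \<Rightarrow> nat set" where
  "alg_output P X k = (case P (hist P X k) of Stop T \<Rightarrow> T | Pull _ \<Rightarrow> {})"

text \<open>Joint law of reward table (arms in S) and the algorithm's internal random seed
(an i.i.d. sequence of uniform [0,1] variables).\<close>

definition bandit_space :: "nat set \<Rightarrow> (nat \<Rightarrow> real measure) \<Rightarrow> ((nat \<times> nat \<Rightarrow> real) \<times> (nat \<Rightarrow> real)) measure" where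
  "bandit_space S D =
     (PiM (S \<times> UNIV) (\<lambda>p. D (fst p))) \<Otimes>\<^sub>M (PiM UNIV (\<lambda>_. uniform_measure lborel {0..1::real}))"

definition arm_mean :: "real measure \<Rightarrow> real" where
  "arm_mean M = (\<integral>x. x \<partial>M)"

end

theory Submission
  imports Defs
begin

text \<open>The algorithm pulls every arm \<open>m \<approx> 8 (ln (1/\<gamma>) + ln (1/\<delta>)) / \<phi>\<^sup>2\<close> times and returns the
  \<open>|S|/10\<close> arms with the largest reward sums. Put the threshold \<open>t\<close> halfway between the
  means of the arms ranked \<open>K/2\<close> and \<open>K\<close>. By Hoeffding's inequality an arm among the top \<open>K/2\<close> or the bottom
  \<open>|S| - K\<close> lands on the wrong side of \<open>t\<close> with probability at most \<open>exp (-m\<phi>\<^sup>2/2) \<le> (\<gamma>\<delta>)\<^sup>4\<close>,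
  so by Markov's inequality, with probability at least \<open>1 - \<delta>\<close>, fewer than
  \<open>min (\<gamma>K) (|S|/15)\<close> of them do. Then more than \<open>K/2 - |S|/15 \<ge> |S|/10\<close> top arms lie above \<open>t\<close>,
  so a bottom arm enters the output only by lying above \<open>t\<close> itself, and fewer than \<open>\<gamma>K\<close> do.\<close>

section \<open>Ranking arms by their estimates\<close>

text \<open>Ties are broken towards smaller indices, so the ranks of the elements of \<open>S\<close> are exactly
  \<open>0, \<dots>, card S - 1\<close>.\<close>

definition rank_among :: "nat set \<Rightarrow> (nat \<Rightarrow> real) \<Rightarrow> nat \<Rightarrow> nat" where
  "rank_among S e i = card {j\<in>S. e i < e j \<or> (e j = e i \<and> j < i)}"

definition top_arms :: "nat set \<Rightarrow> nat \<Rightarrow> (nat \<Rightarrow> real) \<Rightarrow> nat set" where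
  "top_arms S n e = {i\<in>S. rank_among S e i < n}"

lemma rank_among_cong:
  assumes "\<And>j. j \<in> S \<Longrightarrow> e j = e' j" "i \<in> S"
  shows "rank_among S e i = rank_among S e' i"
proof -
  have "{j\<in>S. e i < e j \<or> (e j = e i \<and> j < i)} = {j\<in>S. e' i < e' j \<or> (e' j = e' i \<and> j < i)}"
    using assms by auto
  then show ?thesis by (simp add: rank_among_def)
qed

lemma top_arms_cong:
  assumes "\<And>i. i \<in> S \<Longrightarrow> e i = e' i"
  shows "top_arms S n e = top_arms S n e'"
proof -
  have "rank_among S e i = rank_among S e' i" if "i \<in> S" for i using rank_among_cong[OF assms that] .
  then show ?thesis unfolding top_arms_def by auto
qed

lemma rank_among_less:
  assumes "finite S" "x \<in> S" "y \<in> S" "e x < e y \<or> (e y = e x \<and> y < x)"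
  shows "rank_among S e y < rank_among S e x"
proof -
  let ?A = "{j\<in>S. e y < e j \<or> (e j = e y \<and> j < y)}"
  let ?B = "{j\<in>S. e x < e j \<or> (e j = e x \<and> j < x)}"
  have "?A \<subseteq> ?B" using assms(4) by auto
  moreover have "y \<in> ?B" "y \<notin> ?A" using assms by auto
  ultimately have "?A \<subset> ?B" by blast
  then show ?thesis unfolding rank_among_def using assms(1) by (intro psubset_card_mono) auto
qed

lemma rank_among_less_card:
  assumes "finite S" "x \<in> S"
  shows "rank_among S e x < card S"
proof -
  have "{j\<in>S. e x < e j \<or> (e j = e x \<and> j < x)} \<subset> S" using assms by auto
  then show ?thesis unfolding rank_among_def using assms(1) by (intro psubset_card_mono) auto
qed

lemma inj_on_rank_among:
  assumes "finite S"
  shows "inj_on (rank_among S e) S"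
proof (rule inj_onI)
  fix x y assume xy: "x \<in> S" "y \<in> S" "rank_among S e x = rank_among S e y"
  show "x = y"
  proof (rule ccontr)
    assume "x \<noteq> y"
    then have "(e x < e y \<or> (e y = e x \<and> y < x)) \<or> (e y < e x \<or> (e x = e y \<and> x < y))" by linarith
    then show False
      using rank_among_less[OF assms xy(1,2), of e] rank_among_less[OF assms xy(2,1), of e] xy(3)
      by linarith
  qed
qed

lemma rank_among_image:
  assumes "finite S"
  shows "rank_among S e ` S = {..<card S}"
proof (rule card_subset_eq)
  show "rank_among S e ` S \<subseteq> {..<card S}" using rank_among_less_card[OF assms] by auto
  show "card (rank_among S e ` S) = card {..<card S}"
    using card_image[OF inj_on_rank_among[OF assms]] by simp
qed simp

lemma top_arms_subset: "top_arms S n e \<subseteq> S"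
  unfolding top_arms_def by auto

lemma card_top_arms:
  assumes "finite S" "n \<le> card S"
  shows "card (top_arms S n e) = n"
proof -
  have "rank_among S e ` top_arms S n e = {..<n}"
  proof
    show "rank_among S e ` top_arms S n e \<subseteq> {..<n}" unfolding top_arms_def by auto
    show "{..<n} \<subseteq> rank_among S e ` top_arms S n e"
    proof
      fix k assume "k \<in> {..<n}"
      then have "k \<in> rank_among S e ` S" using rank_among_image[OF assms(1), of e] assms(2) by auto
      then obtain x where "x \<in> S" "k = rank_among S e x" by auto
      then show "k \<in> rank_among S e ` top_arms S n e" using \<open>k \<in> {..<n}\<close> unfolding top_arms_def by auto
    qed
  qed
  moreover have "inj_on (rank_among S e) (top_arms S n e)"
    using inj_on_rank_among[OF assms(1)] top_arms_subset by (metis inj_on_subset)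
  ultimately show ?thesis by (metis card_image card_lessThan)
qed

lemma top_arms_dominates:
  assumes "finite S" "x \<in> top_arms S n e" "y \<in> S" "y \<notin> top_arms S n e"
  shows "e y \<le> e x"
proof (rule ccontr)
  assume "\<not> e y \<le> e x"
  then have "rank_among S e y < rank_among S e x" using assms top_arms_subset by (intro rank_among_less) auto
  then show False using assms unfolding top_arms_def by auto
qed

lemma many_bad_in_top_imp_misestimates:
  fixes e :: "nat \<Rightarrow> real"
  assumes "finite S" and good: "G \<subseteq> S" and bad: "B \<subseteq> S" and "G \<inter> B = {}"
    and "T \<subseteq> S" and "card T = n"
    and dominates: "\<And>x y. x \<in> T \<Longrightarrow> y \<in> S - T \<Longrightarrow> e y \<le> e x"
    and many_bad: "g < real (card (T \<inter> B))"
  shows "min g (real (card G) - real n) < real (card {i\<in>G. e i \<le> t}) + real (card {i\<in>B. t < e i})"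
proof (cases "n \<le> card {i\<in>G. t < e i}")
  case True
  have "T \<inter> B \<subseteq> {i\<in>B. t < e i}"
  proof
    fix b assume b: "b \<in> T \<inter> B"
    have "\<not> insert b {i\<in>G. t < e i} \<subseteq> T"
    proof
      assume "insert b {i\<in>G. t < e i} \<subseteq> T"
      then have "card (insert b {i\<in>G. t < e i}) \<le> n"
        using \<open>finite S\<close> \<open>T \<subseteq> S\<close> \<open>card T = n\<close> by (metis card_mono finite_subset)
      moreover have "b \<notin> {i\<in>G. t < e i}" using b assms(4) by auto
      ultimately show False
        using True assms(1) good by (simp add: finite_subset)
    qed
    then obtain x where "x \<in> G" "t < e x" "x \<notin> T" using b by auto
    moreover have "e x \<le> e b" using dominates[of b x] b \<open>x \<in> G\<close> \<open>x \<notin> T\<close> good by auto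
    ultimately show "b \<in> {i\<in>B. t < e i}" using b by auto
  qed
  then have "card (T \<inter> B) \<le> card {i\<in>B. t < e i}"
    using assms(1) bad by (intro card_mono) (auto intro: finite_subset)
  then show ?thesis using many_bad by linarith
next
  case False
  have "{i\<in>G. e i \<le> t} \<union> {i\<in>G. t < e i} = G" by auto
  then have "card {i\<in>G. e i \<le> t} + card {i\<in>G. t < e i} = card G"
    using assms(1) good by (metis (no_types, lifting) card_Un_disjoint disjoint_iff finite_Un
        finite_subset mem_Collect_eq not_le)
  then show ?thesis using False by linarith
qed

section \<open>Uniform sampling\<close>

definition reward_sum :: "(nat \<times> real) list \<Rightarrow> nat \<Rightarrow> real" where
  "reward_sum h i = sum_list (map snd (filter (\<lambda>p. fst p = i) h))"

definition uniform_sampler :: "nat set \<Rightarrow> nat \<Rightarrow> nat \<Rightarrow> (nat \<times> real) list \<Rightarrow> action" where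
  "uniform_sampler S n m h =
     (if length h < card S * m then Pull (sorted_list_of_set S ! (length h div m))
      else Stop (top_arms S n (reward_sum h)))"

lemma uniform_sampler_pull:
  "length h < card S * m \<Longrightarrow> uniform_sampler S n m h = Pull (sorted_list_of_set S ! (length h div m))"
  by (simp add: uniform_sampler_def)

lemma uniform_sampler_stop:
  "card S * m \<le> length h \<Longrightarrow> uniform_sampler S n m h = Stop (top_arms S n (reward_sum h))"
  by (simp add: uniform_sampler_def)

lemma rewards_of_arm_hist:
  "map snd (filter (\<lambda>p. fst p = i) (hist P X k)) =
   map (\<lambda>j. X (i, j)) [0..<length (filter (\<lambda>p. fst p = i) (hist P X k))]"
proof (induction k)
  case 0
  then show ?case by simp
next
  case (Suc k)
  show ?case
  proof (cases "P (hist P X k)")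
    case (Pull j)
    then show ?thesis using Suc by (cases "j = i") (auto simp: Let_def)
  next
    case (Stop T)
    then show ?thesis using Suc by (simp add: Let_def)
  qed
qed

lemma reward_sum_hist:
  "reward_sum (hist P X k) i = (\<Sum>j<length (filter (\<lambda>p. fst p = i) (hist P X k)). X (i, j))"
  unfolding reward_sum_def by (subst rewards_of_arm_hist) (simp add: sum_list_sum_nth atLeast0LessThan)

lemma arms_hist_uniform_sampler:
  assumes "k \<le> card S * m"
  shows "map fst (hist (uniform_sampler S n m) X k) = map (\<lambda>q. sorted_list_of_set S ! (q div m)) [0..<k]"
  using assms
proof (induction k)
  case 0
  then show ?case by simp
next
  case (Suc k)
  then have "length (hist (uniform_sampler S n m) X k) = k"
    by (metis Suc_leD length_map length_upt minus_nat.diff_0)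
  with Suc show ?case by (simp add: Let_def uniform_sampler_pull)
qed

lemma length_hist_uniform_sampler:
  "k \<le> card S * m \<Longrightarrow> length (hist (uniform_sampler S n m) X k) = k"
  using arms_hist_uniform_sampler[of k S m n X] by (metis length_map length_upt minus_nat.diff_0)

lemma hist_uniform_sampler_after_stop:
  assumes "card S * m \<le> k"
  shows "hist (uniform_sampler S n m) X k = hist (uniform_sampler S n m) X (card S * m)"
  using assms
proof (induction k rule: dec_induct)
  case base
  then show ?case by simp
next
  case (step j)
  then show ?case
    using length_hist_uniform_sampler[of "card S * m" S m n X]
    by (simp add: Let_def uniform_sampler_stop)
qed

lemma card_quotient_fibre:
  assumes "0 < m" "r < n"
  shows "card {q. q < n * m \<and> q div m = r} = m"
proof -
  have "{q. q < n * m \<and> q div m = r} = {r * m..<r * m + m}"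
  proof (intro set_eqI iffI)
    fix q assume "q \<in> {q. q < n * m \<and> q div m = r}"
    then have "q div m = r" by simp
    moreover have "q = q div m * m + q mod m" "q mod m < m" using assms(1) by simp_all
    ultimately show "q \<in> {r * m..<r * m + m}" by simp
  next
    fix q assume q: "q \<in> {r * m..<r * m + m}"
    then have "q div m = r" by (intro div_nat_eqI) (auto simp: mult.commute)
    moreover have "r * m + m \<le> n * m"
      using assms(2) by (metis Suc_leI add.commute mult_Suc mult_le_mono1)
    ultimately show "q \<in> {q. q < n * m \<and> q div m = r}" using q by simp
  qed
  then show ?thesis by simp
qed

lemma pulls_uniform_sampler:
  assumes "finite S" "i \<in> S" "0 < m"
  shows "length (filter (\<lambda>p. fst p = i) (hist (uniform_sampler S n m) X (card S * m))) = m"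
proof -
  define L where "L = sorted_list_of_set S"
  have L: "distinct L" "length L = card S" "set L = S"
    using assms(1) by (auto simp: L_def)
  obtain r where r: "r < card S" "L ! r = i"
    using assms(2) L by (metis in_set_conv_nth)
  have block: "q div m < card S" if "q < card S * m" for q
    using that assms(3) by (simp add: less_mult_imp_div_less)
  have "length (filter (\<lambda>p. fst p = i) (hist (uniform_sampler S n m) X (card S * m)))
      = length (filter (\<lambda>x. x = i) (map fst (hist (uniform_sampler S n m) X (card S * m))))"
    by (simp add: filter_map o_def)
  also have "\<dots> = length (filter (\<lambda>q. L ! (q div m) = i) [0..<card S * m])"
    by (simp add: arms_hist_uniform_sampler L_def filter_map o_def)
  also have "\<dots> = card {q. q < card S * m \<and> L ! (q div m) = i}"
    by (simp add: length_filter_conv_card cong: conj_cong)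
  also have "{q. q < card S * m \<and> L ! (q div m) = i} = {q. q < card S * m \<and> q div m = r}"
    using r L block by (auto simp: nth_eq_iff_index_eq)
  also have "card \<dots> = m" using card_quotient_fibre[OF assms(3) r(1)] .
  finally show ?thesis .
qed

lemma uniform_sampler_arm_in:
  assumes "finite S" "uniform_sampler S n m h = Pull i"
  shows "i \<in> S"
proof -
  have h: "length h < card S * m" using assms(2) by (auto simp: uniform_sampler_def split: if_splits)
  then have "length h div m < card S" by (simp add: less_mult_imp_div_less)
  moreover have "i = sorted_list_of_set S ! (length h div m)"
    using assms(2) h by (simp add: uniform_sampler_pull)
  ultimately show ?thesis using assms(1) by (metis length_sorted_list_of_set nth_mem set_sorted_list_of_set)
qed

lemma
  assumes "finite S" "0 < m" "card S * m \<le> N"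
  shows uniform_sampler_stopped: "stopped (uniform_sampler S n m) X N"
    and alg_output_uniform_sampler:
      "alg_output (uniform_sampler S n m) X N = top_arms S n (\<lambda>i. \<Sum>j<m. X (i, j))"
proof -
  let ?h = "hist (uniform_sampler S n m) X N"
  have h: "?h = hist (uniform_sampler S n m) X (card S * m)"
    using hist_uniform_sampler_after_stop[OF assms(3)] .
  have "length ?h = card S * m" unfolding h by (rule length_hist_uniform_sampler) simp
  then have stop: "uniform_sampler S n m ?h = Stop (top_arms S n (reward_sum ?h))"
    by (simp add: uniform_sampler_stop)
  then show "stopped (uniform_sampler S n m) X N" by (simp add: stopped_def)
  have "reward_sum ?h i = (\<Sum>j<m. X (i, j))" if "i \<in> S" for i
    using reward_sum_hist[of "uniform_sampler S n m" X N i]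
    unfolding h pulls_uniform_sampler[OF assms(1) that assms(2)] .
  then have "top_arms S n (reward_sum ?h) = top_arms S n (\<lambda>i. \<Sum>j<m. X (i, j))"
    by (rule top_arms_cong)
  then show "alg_output (uniform_sampler S n m) X N = top_arms S n (\<lambda>i. \<Sum>j<m. X (i, j))"
    using stop by (simp add: alg_output_def)
qed

section \<open>Concentration of the reward sums\<close>

text \<open>Padding the reward laws outside \<open>S\<close> with a point mass makes every factor a probability
  space on the Borel sets, as the locale \<open>product_prob_space\<close> demands.\<close>

definition reward_law :: "nat set \<Rightarrow> (nat \<Rightarrow> real measure) \<Rightarrow> nat \<times> nat \<Rightarrow> real measure" where
  "reward_law S D p = (if fst p \<in> S then D (fst p) else return borel 0)"

lemma product_prob_space_reward_law:
  "(\<And>i. i \<in> S \<Longrightarrow> prob_space (D i)) \<Longrightarrow> product_prob_space (reward_law S D)"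
  by (rule product_prob_spaceI) (auto simp: reward_law_def prob_space_return)

lemma sets_reward_law:
  "(\<And>i. i \<in> S \<Longrightarrow> sets (D i) = sets borel) \<Longrightarrow> sets (reward_law S D p) = sets borel"
  by (auto simp: reward_law_def)

lemma PiM_reward_law: "PiM (S \<times> UNIV) (\<lambda>p. D (fst p)) = PiM (S \<times> UNIV) (reward_law S D)"
  by (rule PiM_cong) (auto simp: reward_law_def)

lemma indep_vars_coordinates:
  assumes "product_prob_space M" and sets_M: "\<And>p. sets (M p) = sets borel"
    and J: "finite J" "J \<subseteq> I" "J \<noteq> {}"
  shows "prob_space.indep_vars (PiM I M) (\<lambda>_. borel) (\<lambda>p x. x p) J"
proof -
  interpret product_prob_space M I by fact
  have coordinate: "random_variable borel (\<lambda>x. x p)" "distr (PiM I M) borel (\<lambda>x. x p) = M p"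
    if "p \<in> J" for p
  proof -
    have "(\<lambda>x. x p) \<in> measurable (PiM I M) (M p)"
      using that J by (intro measurable_component_singleton) auto
    then show "random_variable borel (\<lambda>x. x p)"
      using measurable_cong_sets[OF refl sets_M[of p], of "PiM I M"] by simp
    have "distr (PiM I M) borel (\<lambda>x. x p) = distr (PiM I M) (M p) (\<lambda>x. x p)"
      by (intro distr_cong refl) (simp add: sets_M)
    also have "\<dots> = M p" using that J by (intro PiM_component) auto
    finally show "distr (PiM I M) borel (\<lambda>x. x p) = M p" .
  qed
  have "distr (PiM I M) (PiM J (\<lambda>_. borel)) (\<lambda>x. \<lambda>i\<in>J. x i) = distr (PiM I M) (PiM J M) (\<lambda>x. restrict x J)"
    by (intro distr_cong refl sets_PiM_cong) (simp_all add: sets_M)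
  also have "\<dots> = PiM J M" using J by (intro distr_PiM_restrict_finite) auto
  also have "\<dots> = PiM J (\<lambda>i. distr (PiM I M) borel (\<lambda>x. x i))"
    by (rule PiM_cong) (auto simp: coordinate)
  finally show ?thesis
    using J(3) coordinate(1) by (subst indep_vars_iff_distr_eq_PiM')
qed

lemma expectation_PiM_component:
  fixes M :: "'i \<Rightarrow> real measure"
  assumes "product_prob_space M" "\<And>p. sets (M p) = sets borel" "p \<in> I"
  shows "prob_space.expectation (PiM I M) (\<lambda>x. x p) = (\<integral>y. y \<partial>M p)"
proof -
  interpret product_prob_space M I by fact
  have "(\<lambda>x. x p) \<in> measurable (PiM I M) (M p)"
    using assms(3) by (rule measurable_component_singleton)
  moreover have "(\<lambda>y::real. y) \<in> borel_measurable (M p)"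
    by (subst measurable_cong_sets[OF assms(2) refl]) simp
  ultimately have "expectation (\<lambda>x. x p) = (\<integral>y. y \<partial>distr (PiM I M) (M p) (\<lambda>x. x p))"
    by (rule integral_distr[symmetric])
  also have "distr (PiM I M) (M p) (\<lambda>x. x p) = M p"
    using assms(3) by (rule PiM_component)
  finally show ?thesis .
qed

lemma measurable_coordinate:
  assumes "\<And>i. i \<in> S \<Longrightarrow> sets (D i) = sets borel"
  shows "(\<lambda>x. x p) \<in> borel_measurable (PiM (S \<times> UNIV) (\<lambda>p. D (fst p)))"
proof (cases "p \<in> S \<times> UNIV")
  case True
  then have "(\<lambda>x. x p) \<in> measurable (PiM (S \<times> UNIV) (\<lambda>p. D (fst p))) (D (fst p))"
    by (intro measurable_component_singleton) auto
  moreover have "sets (D (fst p)) = sets borel" using True assms by auto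
  ultimately show ?thesis using measurable_cong_sets by blast
next
  case False
  then have "x p = undefined" if "x \<in> space (PiM (S \<times> UNIV) (\<lambda>p. D (fst p)))" for x
    using that by (cases p) (auto simp: space_PiM PiE_def extensional_def)
  then show ?thesis by (subst measurable_cong[where g = "\<lambda>_. undefined"]) auto
qed

lemma
  fixes D :: "nat \<Rightarrow> real measure" and S :: "nat set"
  defines "M \<equiv> PiM (S \<times> UNIV) (\<lambda>p. D (fst p))"
  assumes D: "\<forall>i\<in>S. prob_space (D i) \<and> sets (D i) = sets borel \<and> measure (D i) {0..1} = 1"
    and "i \<in> S" "0 < m" "0 \<le> \<epsilon>"
  shows hoeffding_arm_sum_ge:
      "measure M {x\<in>space M. real m * arm_mean (D i) + \<epsilon> \<le> (\<Sum>j<m. x (i, j))} \<le> exp (-2 * \<epsilon>\<^sup>2 / real m)"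
    and hoeffding_arm_sum_le:
      "measure M {x\<in>space M. (\<Sum>j<m. x (i, j)) \<le> real m * arm_mean (D i) - \<epsilon>} \<le> exp (-2 * \<epsilon>\<^sup>2 / real m)"
proof -
  let ?R = "reward_law S D"
  have pps: "product_prob_space ?R" and sets_R: "\<And>p. sets (?R p) = sets borel"
    using D by (simp_all add: product_prob_space_reward_law sets_reward_law)
  interpret product_prob_space ?R "S \<times> UNIV" by (rule pps)
  define J where "J = {i} \<times> {..<m}"
  have J: "finite J" "J \<subseteq> S \<times> UNIV" "J \<noteq> {}" using assms(3,4) by (auto simp: J_def)
  have R_J: "?R p = D i" if "p \<in> J" for p
    using that assms(3) by (auto simp: J_def reward_law_def)
  have Di: "prob_space (D i)" "measure (D i) {0..1} = 1" using D assms(3) by auto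
  have bounded: "AE x in PiM (S \<times> UNIV) ?R. x p \<in> {0..1}" if "p \<in> J" for p
  proof (rule AE_component[rotated])
    show "AE y in ?R p. y \<in> {0..1}" unfolding R_J[OF that] using prob_space.AE_prob_1[OF Di] .
  qed (use that J in auto)
  have mean: "expectation (\<lambda>x. x p) = arm_mean (D i)" if "p \<in> J" for p
    using expectation_PiM_component[OF pps sets_R, of p "S \<times> UNIV"] that J R_J[OF that]
    by (auto simp: arm_mean_def)
  define \<mu> where "\<mu> = (\<Sum>p\<in>J. expectation (\<lambda>x. x p))"
  interpret H: Hoeffding_ineq "PiM (S \<times> UNIV) ?R" J "\<lambda>p x. x p" "\<lambda>_. 0" "\<lambda>_. 1" \<mu>
    by unfold_locales
      ((rule J(1) indep_vars_coordinates[OF pps sets_R J] bounded | simp add: \<mu>_def); fact?)+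
  have \<mu>: "\<mu> = real m * arm_mean (D i)"
    unfolding \<mu>_def using mean by (simp add: J_def card_cartesian_product)
  have sum_J: "(\<Sum>p\<in>J. x p) = (\<Sum>j<m. x (i, j))" for x :: "nat \<times> nat \<Rightarrow> real"
  proof -
    have "J = Pair i ` {..<m}" by (auto simp: J_def)
    then show ?thesis by (simp add: sum.reindex inj_on_def)
  qed
  have pos: "(\<Sum>p\<in>J. ((\<lambda>_. 1::real) p - (\<lambda>_. 0) p)\<^sup>2) > 0" using J by (simp add: card_gt_0_iff)
  have card_J: "(\<Sum>p\<in>J. ((\<lambda>_. 1::real) p - (\<lambda>_. 0) p)\<^sup>2) = real m" by (simp add: J_def)
  show "measure M {x\<in>space M. real m * arm_mean (D i) + \<epsilon> \<le> (\<Sum>j<m. x (i, j))} \<le> exp (-2 * \<epsilon>\<^sup>2 / real m)"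
    using H.Hoeffding_ineq_ge[OF assms(5) pos] unfolding M_def PiM_reward_law card_J sum_J \<mu> .
  show "measure M {x\<in>space M. (\<Sum>j<m. x (i, j)) \<le> real m * arm_mean (D i) - \<epsilon>} \<le> exp (-2 * \<epsilon>\<^sup>2 / real m)"
    using H.Hoeffding_ineq_le[OF assms(5) pos] unfolding M_def PiM_reward_law card_J sum_J \<mu> .
qed

lemma
  fixes D :: "nat \<Rightarrow> real measure" and S :: "nat set"
  defines "M \<equiv> PiM (S \<times> UNIV) (\<lambda>p. D (fst p))"
  assumes D: "\<forall>i\<in>S. prob_space (D i) \<and> sets (D i) = sets borel \<and> measure (D i) {0..1} = 1"
    and "i \<in> S" "0 < m" "0 \<le> \<phi>"
  shows prob_arm_sum_below_le:
      "t + \<phi>/2 \<le> arm_mean (D i) \<Longrightarrow>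
       measure M {x\<in>space M. (\<Sum>j<m. x (i, j)) \<le> real m * t} \<le> exp (- (real m * \<phi>\<^sup>2 / 2))"
    and prob_arm_sum_above_le:
      "arm_mean (D i) \<le> t - \<phi>/2 \<Longrightarrow>
       measure M {x\<in>space M. real m * t < (\<Sum>j<m. x (i, j))} \<le> exp (- (real m * \<phi>\<^sup>2 / 2))"
proof -
  interpret R: product_prob_space "reward_law S D" "S \<times> UNIV"
    using D by (simp add: product_prob_space_reward_law)
  interpret M: prob_space M
    unfolding M_def PiM_reward_law by (rule R.P.prob_space_axioms)
  have [measurable]: "(\<lambda>x. x p) \<in> borel_measurable M" for p
    unfolding M_def using D by (intro measurable_coordinate) auto
  have exponent: "-2 * (real m * \<phi> / 2)\<^sup>2 / real m = - (real m * \<phi>\<^sup>2 / 2)"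
    using \<open>0 < m\<close> by (simp add: power2_eq_square field_simps)
  have margin: "0 \<le> real m * \<phi> / 2" using \<open>0 \<le> \<phi>\<close> by simp
  show "measure M {x\<in>space M. (\<Sum>j<m. x (i, j)) \<le> real m * t} \<le> exp (- (real m * \<phi>\<^sup>2 / 2))"
    if "t + \<phi>/2 \<le> arm_mean (D i)"
  proof -
    have "real m * t \<le> real m * arm_mean (D i) - real m * \<phi> / 2"
      using that mult_left_mono[of "t + \<phi>/2" "arm_mean (D i)" "real m"] by (simp add: algebra_simps)
    then have "measure M {x\<in>space M. (\<Sum>j<m. x (i, j)) \<le> real m * t}
        \<le> measure M {x\<in>space M. (\<Sum>j<m. x (i, j)) \<le> real m * arm_mean (D i) - real m * \<phi> / 2}"
      by (intro M.finite_measure_mono) (auto, measurable)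
    also have "\<dots> \<le> exp (- (real m * \<phi>\<^sup>2 / 2))"
      using hoeffding_arm_sum_le[OF D \<open>i \<in> S\<close> \<open>0 < m\<close> margin] unfolding exponent M_def .
    finally show ?thesis .
  qed
  show "measure M {x\<in>space M. real m * t < (\<Sum>j<m. x (i, j))} \<le> exp (- (real m * \<phi>\<^sup>2 / 2))"
    if "arm_mean (D i) \<le> t - \<phi>/2"
  proof -
    have "real m * arm_mean (D i) + real m * \<phi> / 2 \<le> real m * t"
      using that mult_left_mono[of "arm_mean (D i)" "t - \<phi>/2" "real m"] by (simp add: algebra_simps)
    then have "measure M {x\<in>space M. real m * t < (\<Sum>j<m. x (i, j))}
        \<le> measure M {x\<in>space M. real m * arm_mean (D i) + real m * \<phi> / 2 \<le> (\<Sum>j<m. x (i, j))}"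
      by (intro M.finite_measure_mono) (auto, measurable)
    also have "\<dots> \<le> exp (- (real m * \<phi>\<^sup>2 / 2))"
      using hoeffding_arm_sum_ge[OF D \<open>i \<in> S\<close> \<open>0 < m\<close> margin] unfolding exponent M_def .
    finally show ?thesis .
  qed
qed

lemma (in prob_space) prob_many_events_le:
  assumes "finite I" "\<And>i. i \<in> I \<Longrightarrow> E i \<in> events" "\<And>i. i \<in> I \<Longrightarrow> prob (E i) \<le> p" "0 < c"
  shows "prob {x\<in>space M. c \<le> (\<Sum>i\<in>I. indicator (E i) x)} \<le> real (card I) * p / c"
proof -
  have integrable: "integrable M (indicator (E i) :: _ \<Rightarrow> real)" if "i \<in> I" for i
    using assms(2)[OF that] by (simp add: emeasure_eq_measure)
  have "prob {x\<in>space M. c \<le> (\<Sum>i\<in>I. indicator (E i) x)} \<le> (\<integral>x. (\<Sum>i\<in>I. indicator (E i) x) \<partial>M) / c"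
    using integrable assms(4)
    by (intro integral_Markov_inequality_measure[where A = "space M"]) (auto intro!: sum_nonneg)
  also have "(\<integral>x. (\<Sum>i\<in>I. indicator (E i) x) \<partial>M) = (\<Sum>i\<in>I. prob (E i))"
    using integrable assms(2) by (simp add: integral_sum)
  also have "\<dots> \<le> real (card I) * p"
    using sum_mono[of I "\<lambda>i. prob (E i)" "\<lambda>_. p"] assms(3) by simp
  finally show ?thesis using assms(4) by (simp add: divide_right_mono)
qed

lemma measure_pair_fst_event:
  assumes "prob_space N" "{x\<in>space M. P x} \<in> sets M"
  shows "measure (M \<Otimes>\<^sub>M N) {\<omega>\<in>space (M \<Otimes>\<^sub>M N). P (fst \<omega>)} = measure M {x\<in>space M. P x}"
proof -
  have "{\<omega>\<in>space (M \<Otimes>\<^sub>M N). P (fst \<omega>)} = {x\<in>space M. P x} \<times> space N"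
    by (auto simp: space_pair_measure)
  moreover interpret N: prob_space N by fact
  have "emeasure (M \<Otimes>\<^sub>M N) ({x\<in>space M. P x} \<times> space N) = emeasure M {x\<in>space M. P x}"
    using N.emeasure_pair_measure_Times[OF assms(2) sets.top] by (simp add: N.emeasure_space_1)
  ultimately show ?thesis by (simp add: measure_def)
qed

text \<open>Only comparisons between estimates occur on the right-hand side, which makes the
  measurability of the number of bad arms in the output mechanical.\<close>

lemma real_card_top_arms_Int:
  assumes "finite S" "B \<subseteq> S"
  shows "real (card (top_arms S n e \<inter> B)) =
    (\<Sum>i\<in>B. if (\<Sum>j\<in>S. if e i < e j \<or> (e j = e i \<and> j < i) then 1 else 0) < real n then 1 else 0)"
proof -
  have rank_eq: "real (rank_among S e i) = (\<Sum>j\<in>S. if e i < e j \<or> (e j = e i \<and> j < i) then 1 else 0)" for i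
    unfolding rank_among_def using assms(1) by (simp add: sum.If_cases Int_def)
  have "top_arms S n e \<inter> B =
      {i\<in>B. (\<Sum>j\<in>S. if e i < e j \<or> (e j = e i \<and> j < i) then 1 else 0) < real n}"
    using assms(2) unfolding top_arms_def by (auto simp: rank_eq[symmetric])
  then show ?thesis
    using finite_subset[OF assms(2,1)] by (simp add: sum.If_cases Int_def)
qed

lemma measurable_card_top_arms_Int:
  assumes "finite S" "B \<subseteq> S" "\<And>i. (\<lambda>x. f x i) \<in> borel_measurable M"
  shows "(\<lambda>x. real (card (top_arms S n (f x) \<inter> B))) \<in> borel_measurable M"
  unfolding real_card_top_arms_Int[OF assms(1,2)] using assms(3) by measurable

lemma prob_top_arms_few_bad:
  fixes D :: "nat \<Rightarrow> real measure" and S G B :: "nat set" and t \<phi> g \<delta> :: real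
  defines "M \<equiv> PiM (S \<times> UNIV) (\<lambda>p. D (fst p))"
  assumes D: "\<forall>i\<in>S. prob_space (D i) \<and> sets (D i) = sets borel \<and> measure (D i) {0..1} = 1"
    and "finite S" "0 < m" "n \<le> card S"
    and "G \<subseteq> S" "B \<subseteq> S" "G \<inter> B = {}"
    and good: "\<And>i. i \<in> G \<Longrightarrow> t + \<phi>/2 \<le> arm_mean (D i)"
    and bad: "\<And>i. i \<in> B \<Longrightarrow> arm_mean (D i) \<le> t - \<phi>/2"
    and "0 < \<phi>" and c_pos: "0 < min g (real (card G) - real n)"
    and small: "real (card S) * exp (- (real m * \<phi>\<^sup>2 / 2)) / min g (real (card G) - real n) \<le> \<delta>"
  shows "1 - \<delta> \<le> measure M {x\<in>space M. real (card (top_arms S n (\<lambda>i. \<Sum>j<m. x (i, j)) \<inter> B)) \<le> g}"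
proof -
  interpret R: product_prob_space "reward_law S D" "S \<times> UNIV"
    using D by (simp add: product_prob_space_reward_law)
  interpret M: prob_space M
    unfolding M_def PiM_reward_law by (rule R.P.prob_space_axioms)
  have [measurable]: "(\<lambda>x. x p) \<in> borel_measurable M" for p
    unfolding M_def using D by (intro measurable_coordinate) auto
  define c where "c = min g (real (card G) - real n)"
  define p where "p = exp (- (real m * \<phi>\<^sup>2 / 2))"
  define e where "e x i = (\<Sum>j<m. x (i, j))" for x :: "nat \<times> nat \<Rightarrow> real" and i
  define E where "E i = {x\<in>space M. if i \<in> G then e x i \<le> real m * t else real m * t < e x i}" for i
  have [measurable]: "(\<lambda>x. e x i) \<in> borel_measurable M" for i unfolding e_def by measurable
  have [measurable]: "E i \<in> sets M" for i unfolding E_def by measurable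
  have prob_E: "M.prob (E i) \<le> p" if "i \<in> G \<union> B" for i
  proof (cases "i \<in> G")
    case True
    then have "E i = {x\<in>space M. (\<Sum>j<m. x (i, j)) \<le> real m * t}" by (simp add: E_def e_def)
    then show ?thesis
      using prob_arm_sum_below_le[OF D _ \<open>0 < m\<close> less_imp_le[OF \<open>0 < \<phi>\<close>] good[OF True]]
        True \<open>G \<subseteq> S\<close>
      by (auto simp: M_def p_def)
  next
    case False
    then have "i \<in> B" "E i = {x\<in>space M. real m * t < (\<Sum>j<m. x (i, j))}"
      using that by (simp_all add: E_def e_def)
    then show ?thesis
      using prob_arm_sum_above_le[OF D _ \<open>0 < m\<close> less_imp_le[OF \<open>0 < \<phi>\<close>] bad] \<open>B \<subseteq> S\<close>
      by (auto simp: M_def p_def)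
  qed
  have fin: "finite G" "finite B" using assms by (auto intro: finite_subset)
  have "M.prob {x\<in>space M. c \<le> (\<Sum>i\<in>G \<union> B. indicator (E i) x)} \<le> real (card (G \<union> B)) * p / c"
    using prob_E fin c_pos by (intro M.prob_many_events_le) (auto simp: c_def)
  also have "\<dots> \<le> real (card S) * p / c"
    using card_mono[OF \<open>finite S\<close>, of "G \<union> B"] assms c_pos
    by (intro divide_right_mono mult_right_mono) (auto simp: p_def c_def)
  also have "\<dots> \<le> \<delta>" using small by (simp add: c_def p_def)
  finally have Markov: "M.prob {x\<in>space M. c \<le> (\<Sum>i\<in>G \<union> B. indicator (E i) x)} \<le> \<delta>" .
  have count: "(\<Sum>i\<in>G \<union> B. indicator (E i) x) =
      real (card {i\<in>G. e x i \<le> real m * t}) + real (card {i\<in>B. real m * t < e x i})"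
    if "x \<in> space M" for x
  proof -
    have "(\<Sum>i\<in>G. indicator (E i) x) = (\<Sum>i\<in>G. if e x i \<le> real m * t then 1 else (0::real))"
      using that by (intro sum.cong) (auto simp: E_def indicator_def)
    moreover have "(\<Sum>i\<in>B. indicator (E i) x) = (\<Sum>i\<in>B. if real m * t < e x i then 1 else (0::real))"
      using that \<open>G \<inter> B = {}\<close> by (intro sum.cong) (auto simp: E_def indicator_def)
    ultimately show ?thesis
      using fin \<open>G \<inter> B = {}\<close> by (simp add: sum.union_disjoint sum.If_cases Int_def)
  qed
  have few_bad: "real (card (top_arms S n (e x) \<inter> B)) \<le> g"
    if "x \<in> space M" "(\<Sum>i\<in>G \<union> B. indicator (E i) x) < c" for x
  proof (rule ccontr)
    assume "\<not> ?thesis"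
    then have "c < real (card {i\<in>G. e x i \<le> real m * t}) + real (card {i\<in>B. real m * t < e x i})"
      unfolding c_def
      by (intro many_bad_in_top_imp_misestimates[OF \<open>finite S\<close> \<open>G \<subseteq> S\<close> \<open>B \<subseteq> S\<close> \<open>G \<inter> B = {}\<close>
            top_arms_subset card_top_arms[OF \<open>finite S\<close> \<open>n \<le> card S\<close>]]
            top_arms_dominates[OF \<open>finite S\<close>]) auto
    then show False using that count by simp
  qed
  have "1 - \<delta> \<le> 1 - M.prob {x\<in>space M. c \<le> (\<Sum>i\<in>G \<union> B. indicator (E i) x)}" using Markov by simp
  also have "\<dots> = M.prob {x\<in>space M. (\<Sum>i\<in>G \<union> B. indicator (E i) x) < c}"
    by (subst M.prob_compl[symmetric]) (measurable, auto intro: arg_cong[where f = M.prob])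
  also have "\<dots> \<le> M.prob {x\<in>space M. real (card (top_arms S n (e x) \<inter> B)) \<le> g}"
  proof (rule M.finite_measure_mono)
    have "(\<lambda>x. real (card (top_arms S n (e x) \<inter> B))) \<in> borel_measurable M"
      by (rule measurable_card_top_arms_Int[OF \<open>finite S\<close> \<open>B \<subseteq> S\<close>]) measurable
    then show "{x\<in>space M. real (card (top_arms S n (e x) \<inter> B)) \<le> g} \<in> M.events"
      by measurable
  qed (use few_bad in auto)
  finally show ?thesis unfolding e_def .
qed

section \<open>Choice of the sample size\<close>

definition samples_per_arm :: "real \<Rightarrow> real \<Rightarrow> real \<Rightarrow> nat" where
  "samples_per_arm \<gamma> \<delta> \<phi> = nat \<lceil>8 * (ln (1/\<gamma>) + ln (1/\<delta>)) / \<phi>\<^sup>2\<rceil>"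

lemma samples_per_arm_bounds:
  fixes \<gamma> \<delta> \<phi> :: real
  defines "L \<equiv> ln (1/\<gamma>) + ln (1/\<delta>)"
  assumes "0 < \<gamma>" "\<gamma> \<le> 1/2" "0 < \<delta>" "\<delta> \<le> 1/2" "0 < \<phi>" "\<phi> \<le> 1"
  shows "0 < samples_per_arm \<gamma> \<delta> \<phi>"
    and "real (samples_per_arm \<gamma> \<delta> \<phi>) \<le> 16 * L / \<phi>\<^sup>2"
    and "exp (- (real (samples_per_arm \<gamma> \<delta> \<phi>) * \<phi>\<^sup>2 / 2)) \<le> (\<gamma> * \<delta>)^4"
proof -
  have ln_inverse: "ln (1/\<gamma>) = - ln \<gamma>" "ln (1/\<delta>) = - ln \<delta>" using assms by (simp_all add: ln_div)
  have "ln \<gamma> \<le> \<gamma> - 1" "ln \<delta> \<le> \<delta> - 1" using assms by (simp_all add: ln_le_minus_one)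
  then have "1 \<le> L" unfolding L_def using ln_inverse assms by linarith
  moreover have "0 < \<phi>\<^sup>2" "\<phi>\<^sup>2 \<le> 1" using assms by (simp_all add: power_le_one)
  ultimately have L8: "1 \<le> 8 * L / \<phi>\<^sup>2" by (simp add: le_divide_eq)
  then show "0 < samples_per_arm \<gamma> \<delta> \<phi>" by (simp add: samples_per_arm_def L_def)
  have "real (samples_per_arm \<gamma> \<delta> \<phi>) \<le> 8 * L / \<phi>\<^sup>2 + 1"
    using L8 by (simp add: samples_per_arm_def L_def)
  also have "\<dots> \<le> 16 * L / \<phi>\<^sup>2" using L8 by simp
  finally show "real (samples_per_arm \<gamma> \<delta> \<phi>) \<le> 16 * L / \<phi>\<^sup>2" .
  have "8 * L / \<phi>\<^sup>2 \<le> real (samples_per_arm \<gamma> \<delta> \<phi>)"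
    using L8 by (simp add: samples_per_arm_def L_def)
  then have "8 * L \<le> real (samples_per_arm \<gamma> \<delta> \<phi>) * \<phi>\<^sup>2"
    using \<open>0 < \<phi>\<^sup>2\<close> by (simp add: divide_le_eq)
  then have "exp (- (real (samples_per_arm \<gamma> \<delta> \<phi>) * \<phi>\<^sup>2 / 2)) \<le> exp (4 * ln \<gamma> + 4 * ln \<delta>)"
    using ln_inverse unfolding L_def by simp
  also have "\<dots> = (\<gamma> * \<delta>)^4"
    using assms by (simp add: exp_add power_mult_distrib exp_ln_iff exp_of_nat_mult[of 4, simplified])
  finally show "exp (- (real (samples_per_arm \<gamma> \<delta> \<phi>) * \<phi>\<^sup>2 / 2)) \<le> (\<gamma> * \<delta>)^4" .
qed

lemma failure_bound_le:
  fixes \<gamma> \<delta> p s k h :: real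
  assumes "0 < \<gamma>" "\<gamma> \<le> 1/2" "0 < \<delta>" "\<delta> \<le> 1/2" "0 \<le> p" "p \<le> (\<gamma> * \<delta>)^4"
    and "0 \<le> s" "s \<le> 3 * k" "s / 15 \<le> h" "0 < min (\<gamma> * k) h"
  shows "s * p / min (\<gamma> * k) h \<le> \<delta>"
proof -
  have "0 < \<gamma> * \<delta>" "\<gamma> * \<delta> \<le> 1/4"
    using assms(1-4) mult_mono[OF assms(2,4)] by simp_all
  then have "(\<gamma> * \<delta>)^4 \<le> (\<gamma> * \<delta>) * (1/4)^3"
    unfolding power_Suc[of _ 3, simplified] by (intro mult_left_mono power_mono) simp_all
  then have "p \<le> \<gamma> * \<delta> / 64" using assms(6) by (simp add: power3_eq_cube)
  then have "s * p \<le> s * (\<gamma> * \<delta>) / 64" using mult_left_mono[OF _ assms(7)] by fastforce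
  moreover have "s * (\<gamma> * \<delta>) \<le> 3 * (k * (\<gamma> * \<delta>))"
    using assms(8) \<open>0 < \<gamma> * \<delta>\<close> mult_right_mono[of s "3 * k" "\<gamma> * \<delta>"] by simp
  moreover have "s * \<gamma> \<le> 15 * h" using assms(2,7,9) mult_left_le[of \<gamma> s] by simp
  then have "s * (\<gamma> * \<delta>) \<le> 15 * (h * \<delta>)"
    using assms(3) mult_right_mono[of "s * \<gamma>" "15 * h" \<delta>] by (simp add: mult.assoc)
  moreover have "0 \<le> s * (\<gamma> * \<delta>)" using assms(7) \<open>0 < \<gamma> * \<delta>\<close> by simp
  moreover have "k * (\<gamma> * \<delta>) = \<delta> * (\<gamma> * k)" "h * \<delta> = \<delta> * h" by simp_all
  ultimately have "s * p \<le> \<delta> * (\<gamma> * k)" "s * p \<le> \<delta> * h" by linarith+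
  then have "s * p \<le> \<delta> * min (\<gamma> * k) h" by (simp add: min_def)
  then show ?thesis using assms(10) by (simp add: divide_le_eq mult.commute)
qed

section \<open>Separation of the top and the bottom arms\<close>

lemma ranked_arm_groups:
  fixes D :: "nat \<Rightarrow> real measure" and a :: "nat \<Rightarrow> nat" and K :: nat and S :: "nat set"
  defines "G \<equiv> a ` {1..K div 2}" and "B \<equiv> a ` {K + 1..card S}"
  assumes "bij_betw a {1..card S} S" "1 \<le> K" "K \<le> card S"
    and sorted: "\<forall>i j. 1 \<le> i \<longrightarrow> i \<le> j \<longrightarrow> j \<le> card S \<longrightarrow> arm_mean (D (a j)) \<le> arm_mean (D (a i))"
    and gap: "\<phi> \<le> arm_mean (D (a (K div 2))) - arm_mean (D (a K))"
  shows "G \<subseteq> S" "B \<subseteq> S" "G \<inter> B = {}" "card G = K div 2"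
    and "\<And>i. i \<in> G \<Longrightarrow> arm_mean (D (a K)) + \<phi> \<le> arm_mean (D i)"
    and "\<And>i. i \<in> B \<Longrightarrow> arm_mean (D i) \<le> arm_mean (D (a K))"
proof -
  have inj: "inj_on a {1..card S}" and image: "a ` {1..card S} = S"
    using assms(3) by (simp_all add: bij_betw_def)
  have half: "K div 2 \<le> card S" using assms(5) by linarith
  have "G \<subseteq> a ` {1..card S}" "B \<subseteq> a ` {1..card S}"
    unfolding G_def B_def using half by (auto intro: image_mono)
  then show "G \<subseteq> S" "B \<subseteq> S" unfolding image by simp_all
  have "G \<inter> B = a ` ({1..K div 2} \<inter> {K + 1..card S})"
    unfolding G_def B_def using half by (intro inj_on_image_Int[OF inj, symmetric]) auto
  then show "G \<inter> B = {}" by auto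
  show "card G = K div 2"
    unfolding G_def using half by (subst card_image[OF inj_on_subset[OF inj]]) auto
  show "arm_mean (D (a K)) + \<phi> \<le> arm_mean (D i)" if "i \<in> G" for i
    using that sorted[rule_format, of _ "K div 2"] gap half by (force simp: G_def)
  show "arm_mean (D i) \<le> arm_mean (D (a K))" if "i \<in> B" for i
    using that sorted[rule_format, of K] assms(4) by (auto simp: B_def)
qed

lemma prob_uniform_sampler_correct:
  fixes S :: "nat set" and K :: nat and \<gamma> \<delta> \<phi> :: real and D :: "nat \<Rightarrow> real measure" and a :: "nat \<Rightarrow> nat"
  defines "m \<equiv> samples_per_arm \<gamma> \<delta> \<phi>"
  assumes "finite S" "card S mod 10 = 0" "even K" "real (card S) \<le> 3 * real K" "K + 1 \<le> card S"
    and "0 < \<gamma>" "\<gamma> \<le> 1/2" "0 < \<delta>" "\<delta> \<le> 1/2" "0 < \<phi>" "\<phi> \<le> 1"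
    and D: "\<forall>i\<in>S. prob_space (D i) \<and> sets (D i) = sets borel \<and> measure (D i) {0..1} = 1"
    and "bij_betw a {1..card S} S"
    and "\<forall>i j. 1 \<le> i \<longrightarrow> i \<le> j \<longrightarrow> j \<le> card S \<longrightarrow> arm_mean (D (a j)) \<le> arm_mean (D (a i))"
    and "\<phi> \<le> arm_mean (D (a (K div 2))) - arm_mean (D (a K))"
    and "card S * m \<le> N"
  shows "1 - \<delta> \<le> measure (bandit_space S D)
           {\<omega> \<in> space (bandit_space S D).
              (let T = alg_output (uniform_sampler S (card S div 10) m) (fst \<omega>) N in
                T \<subseteq> S \<and> card T = card S div 10 \<and>
                real (card (T \<inter> a ` {K+1..card S})) \<le> \<gamma> * real K)}"
proof -
  define n where "n = card S div 10"
  define G where "G = a ` {1..K div 2}"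
  define B where "B = a ` {K+1..card S}"
  define M where "M = PiM (S \<times> (UNIV :: nat set)) (\<lambda>p. D (fst p))"
  define good where
    "good x \<longleftrightarrow> real (card (top_arms S n (\<lambda>i. \<Sum>j<m. x (i, j)) \<inter> B)) \<le> \<gamma> * real K" for x :: "nat \<times> nat \<Rightarrow> real"
  have "1 \<le> K" "K \<le> card S" using assms(5,6) by linarith+
  note groups = ranked_arm_groups[OF assms(14) \<open>1 \<le> K\<close> \<open>K \<le> card S\<close> assms(15,16), folded G_def B_def]
  have "0 < m" unfolding m_def using assms(7-12) by (rule samples_per_arm_bounds)
  have "n \<le> card S" by (simp add: n_def)
  obtain q r where "card S = 10 * q" "K = 2 * r" using assms(3,4) by (auto elim!: evenE)
  then have "real (card S) / 15 \<le> real (card G) - real n"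
    using groups(4) assms(5) by (simp add: n_def)
  then have c_pos: "0 < min (\<gamma> * real K) (real (card G) - real n)"
    using \<open>1 \<le> K\<close> assms(6,7) by auto
  have "1 - \<delta> \<le> measure M {x\<in>space M. good x}"
    unfolding M_def good_def
  proof (rule prob_top_arms_few_bad[OF D assms(2) \<open>0 < m\<close> \<open>n \<le> card S\<close> groups(1-3) _ _ assms(11) c_pos])
    show "arm_mean (D (a K)) + \<phi> / 2 + \<phi> / 2 \<le> arm_mean (D i)" if "i \<in> G" for i
      using groups(5)[OF that] by simp
    show "arm_mean (D i) \<le> arm_mean (D (a K)) + \<phi> / 2 - \<phi> / 2" if "i \<in> B" for i
      using groups(6)[OF that] by simp
    show "real (card S) * exp (- (real m * \<phi>\<^sup>2 / 2)) / min (\<gamma> * real K) (real (card G) - real n) \<le> \<delta>"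
      using samples_per_arm_bounds(3)[OF assms(7-12)] assms(5,7-10) c_pos \<open>card S / 15 \<le> _\<close>
      by (intro failure_bound_le) (simp_all add: m_def)
  qed
  also have "measure M {x\<in>space M. good x} = measure (bandit_space S D)
      {\<omega> \<in> space (bandit_space S D). good (fst \<omega>)}"
    unfolding bandit_space_def M_def[symmetric]
  proof (rule measure_pair_fst_event[symmetric])
    interpret U: product_prob_space "\<lambda>_::nat. uniform_measure lborel {0..1::real}" UNIV
      by (intro product_prob_spaceI prob_space_uniform_measure) auto
    show "prob_space (PiM UNIV (\<lambda>_::nat. uniform_measure lborel {0..1::real}))"
      by (rule U.P.prob_space_axioms)
    have "(\<lambda>x. x p) \<in> borel_measurable M" for p
      unfolding M_def using D by (intro measurable_coordinate) auto
    then have "(\<lambda>x. real (card (top_arms S n (\<lambda>i. \<Sum>j<m. x (i, j)) \<inter> B))) \<in> borel_measurable M"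
      using groups(2) assms(2) by (intro measurable_card_top_arms_Int) auto
    then show "{x\<in>space M. good x} \<in> sets M" unfolding good_def by measurable
  qed
  also have "{\<omega> \<in> space (bandit_space S D). good (fst \<omega>)} =
      {\<omega> \<in> space (bandit_space S D).
         (let T = alg_output (uniform_sampler S (card S div 10) m) (fst \<omega>) N in
           T \<subseteq> S \<and> card T = card S div 10 \<and> real (card (T \<inter> a ` {K+1..card S})) \<le> \<gamma> * real K)}"
    using alg_output_uniform_sampler[OF assms(2) \<open>0 < m\<close> assms(17)] top_arms_subset
      card_top_arms[OF assms(2) \<open>n \<le> card S\<close>]
    by (simp add: good_def n_def B_def)
  finally show ?thesis .
qed

theorem mainTheorem8:
  "\<exists>C::real. C > 0 \<and>
   (\<exists>alg :: nat set \<Rightarrow> nat \<Rightarrow> real \<Rightarrow> real \<Rightarrow> real \<Rightarrow> (nat \<Rightarrow> real) \<Rightarrow> (nat \<times> real) list \<Rightarrow> action.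
     \<forall>(S::nat set) (K::nat) (\<gamma>::real) (\<delta>::real) (\<phi>::real) (D::nat \<Rightarrow> real measure) (a::nat \<Rightarrow> nat).
       finite S \<longrightarrow> card S mod 10 = 0 \<longrightarrow> even K \<longrightarrow>
       real (card S) \<le> 3 * real K \<longrightarrow> K + 1 \<le> card S \<longrightarrow>
       0 < \<gamma> \<longrightarrow> \<gamma> \<le> 1/2 \<longrightarrow> 0 < \<delta> \<longrightarrow> \<delta> \<le> 1/2 \<longrightarrow> 0 < \<phi> \<longrightarrow> \<phi> \<le> 1 \<longrightarrow>
       (\<forall>i\<in>S. prob_space (D i) \<and> sets (D i) = sets borel \<and> measure (D i) {0..1} = 1) \<longrightarrow>
       bij_betw a {1..card S} S \<longrightarrow>
       (\<forall>i j. 1 \<le> i \<longrightarrow> i \<le> j \<longrightarrow> j \<le> card S \<longrightarrow> arm_mean (D (a j)) \<le> arm_mean (D (a i))) \<longrightarrow>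
       arm_mean (D (a (K div 2))) - arm_mean (D (a K)) \<ge> \<phi> \<longrightarrow>
       (let N = nat \<lfloor>C * real (card S) / \<phi>\<^sup>2 * (ln (1/\<gamma>) + ln (1/\<delta>))\<rfloor>;
            P = alg S K \<gamma> \<delta> \<phi>
        in (\<forall>X s k i. P s (hist (P s) X k) = Pull i \<longrightarrow> i \<in> S)
         \<and> (\<forall>X s. (\<forall>p. X p \<in> {0..1}) \<longrightarrow> (\<forall>n. s n \<in> {0..1}) \<longrightarrow> stopped (P s) X N)
         \<and> measure (bandit_space S D)
             {\<omega> \<in> space (bandit_space S D).
                (let T = alg_output (P (snd \<omega>)) (fst \<omega>) N in
                  T \<subseteq> S \<and> card T = card S div 10 \<and>
                  real (card (T \<inter> a ` {K+1..card S})) \<le> \<gamma> * real K)}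
           \<ge> 1 - \<delta>))"
  apply (intro exI[of _ "16::real"] conjI
      exI[of _ "\<lambda>S K \<gamma> \<delta> \<phi> (_::nat \<Rightarrow> real). uniform_sampler S (card S div 10) (samples_per_arm \<gamma> \<delta> \<phi>)"]
      allI impI)
   apply simp
  subgoal premises hyps for S K \<gamma> \<delta> \<phi> D a
  proof -
    define m where "m = samples_per_arm \<gamma> \<delta> \<phi>"
    have "0 < m" unfolding m_def using hyps(6-11) by (rule samples_per_arm_bounds)
    have "real (card S * m) \<le> real (card S) * (16 * (ln (1/\<gamma>) + ln (1/\<delta>)) / \<phi>\<^sup>2)"
      unfolding of_nat_mult m_def using samples_per_arm_bounds(2)[OF hyps(6-11)] by (rule mult_left_mono) simp
    then have "card S * m \<le> nat \<lfloor>16 * real (card S) / \<phi>\<^sup>2 * (ln (1/\<gamma>) + ln (1/\<delta>))\<rfloor>"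
      by (intro le_nat_floor) (simp add: algebra_simps)
    then show ?thesis
      using uniform_sampler_arm_in[OF hyps(1)] uniform_sampler_stopped[OF hyps(1) \<open>0 < m\<close>]
        prob_uniform_sampler_correct[OF hyps] unfolding m_def Let_def by blast
  qed
  done

end
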